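(* For each $1\le n\le\omega$: (1) $X_n^{\mathrm{inj}}$ is a comeager subset of $X_n$ and is invariant under the action $a_n$; (2) the orbit equivalence relation of $a_n$ restricted to $X_n^{\mathrm{inj}}$ equals $F_n\restriction X_n^{\mathrm{inj}}$.
   Context: Let $\mathbb N=\{0,1,2,\dots\}$ and identify $2^{\mathbb N}$ with $\mathcal P(\mathbb N)$. For $1\le m\le\omega$ and $x\in((2^{\mathbb N})^{\mathbb N})^m$ define recursively: $A^x_1=\{x(0)(k):k\in\mathbb N\}\subseteq 2^{\mathbb N}$; for $1\le j<m$ and $l\in\mathbb N$, $a^{x,l}_1=\{x(0)(k):x(1)(l)(k)=1\}$ and $a^{x,l}_{j}=\{a^{x,k}_{j-1}:x(j)(l)(k)=1\}$ for $j\ge 2$; and $A^x_{j+1}=\{a^{x,k}_j:k\in\mathbb N\}$ for $1\le j<m$. Let $X_1=(2^{\mathbb N})^{\mathbb N}$, and for $2\le n\le\omega$ let $X_n$ be the set of $x\in((2^{\mathbb N})^{\mathbb N})^n$ such that for every $1\le i<n$: (1) for every $m$ there is $k$ with $x(i)(k)(m)=1$; (2) for every $k$ there is $m$ with $x(i)(k)(m)=1$; (3) for all $k,l_1,l_2$, if $x(i-1)(l_1)=x(i-1)(l_2)$ then $x(i)(k)(l_1)=x(i)(k)(l_2)$. For $1\le n<\omega$, $F_n$ on $X_n$ is $x\mathrel{F_n}y\iff A^x_n=A^y_n$; $F_\omega$ on $X_\omega$ is $x\mathrel{F_\omega}y\iff A^x_j=A^y_j$ for all $1\le j<\omega$. Actions: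 $S_\infty$ is the group of permutations of $\mathbb N$. For $g\in S_\infty$ and $z\in(2^{\mathbb N})^{\mathbb N}$ let $(g\cdot_a z)(m)=z(g^{-1}(m))$. For $(g,h)\in S_\infty\times S_\infty$ and $z\in(2^{\mathbb N})^{\mathbb N}$ let $((g,h)\cdot_c z)(m)(j)=z(h^{-1}(m))(g^{-1}(j))$. The action $a_n$ of $(S_\infty)^n$ on $((2^{\mathbb N})^{\mathbb N})^n$ is $(g\cdot_{a_n}x)(0)=g(0)\cdot_a x(0)$ and $(g\cdot_{a_n}x)(k+1)=(g(k),g(k+1))\cdot_c x(k+1)$ for $k+1<n$. $X_n^{\mathrm{inj}}$ is the set of $x\in X_n$ such that $k\mapsto x(0)(k)$ is injective and, for each $1\le k<n$, $l\mapsto a^{x,l}_k$ is injective. *)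

theory Defs
  imports "HOL-Analysis.Analysis" "HOL-Library.Countable_Set_Type" "HOL-Library.Extended_Nat"
begin

(* Points of 2^N are functions nat => bool; z :: nat => nat => bool is an element of (2^N)^N;
   x :: nat => nat => nat => bool is an element of ((2^N)^N)^n with coordinates i, enat i < n,
   and value undefined at coordinates i >= n (PiE convention of product_topology). *)

type_synonym pt = "nat \<Rightarrow> nat \<Rightarrow> nat \<Rightarrow> bool"

definition cantor_top :: "(nat \<Rightarrow> bool) topology" where
  "cantor_top = product_topology (\<lambda>_. discrete_topology UNIV) UNIV"

definition seq_top :: "(nat \<Rightarrow> nat \<Rightarrow> bool) topology" where
  "seq_top = product_topology (\<lambda>_. cantor_top) UNIV"

definition space_top :: "enat \<Rightarrow> pt topology" where
  "space_top n = product_topology (\<lambda>_. seq_top) {i. enat i < n}"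

(* hereditarily countable sets over urelements from 2^N *)
datatype hset = Ur "nat \<Rightarrow> bool" | CS "hset cset"

(* elt x 0 k = x(0)(k);  elt x j l = a^{x,l}_j for j >= 1 *)
fun elt :: "pt \<Rightarrow> nat \<Rightarrow> nat \<Rightarrow> hset" where
  "elt x 0 k = Ur (x 0 k)"
| "elt x (Suc j) l = CS (acset (elt x j ` {k. x (Suc j) l k}))"

definition Aset :: "pt \<Rightarrow> nat \<Rightarrow> hset set" where
  "Aset x j = range (elt x (j - 1))"

definition Xn :: "enat \<Rightarrow> pt set" where
  "Xn n = {x \<in> topspace (space_top n).
      \<forall>i. 1 \<le> i \<and> enat i < n \<longrightarrow>
        (\<forall>m. \<exists>k. x i k m) \<and>
        (\<forall>k. \<exists>m. x i k m) \<and>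
        (\<forall>k l1 l2. x (i - 1) l1 = x (i - 1) l2 \<longrightarrow> x i k l1 = x i k l2)}"

definition Fn :: "enat \<Rightarrow> pt \<Rightarrow> pt \<Rightarrow> bool" where
  "Fn n x y \<longleftrightarrow> x \<in> Xn n \<and> y \<in> Xn n \<and>
     (case n of enat m \<Rightarrow> Aset x m = Aset y m
              | \<infinity> \<Rightarrow> (\<forall>j. 1 \<le> j \<longrightarrow> Aset x j = Aset y j))"

definition Xinj :: "enat \<Rightarrow> pt set" where
  "Xinj n = {x \<in> Xn n. inj (\<lambda>k. x 0 k) \<and>
      (\<forall>k. 1 \<le> k \<and> enat k < n \<longrightarrow> inj (elt x k))}"

definition Sinf_pow :: "enat \<Rightarrow> (nat \<Rightarrow> nat \<Rightarrow> nat) set" where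
  "Sinf_pow n = {g. \<forall>k. enat k < n \<longrightarrow> bij (g k)}"

definition act :: "enat \<Rightarrow> (nat \<Rightarrow> nat \<Rightarrow> nat) \<Rightarrow> pt \<Rightarrow> pt" where
  "act n g x = (\<lambda>i. if enat i < n then
       (if i = 0 then (\<lambda>m. x 0 (inv (g 0) m))
        else (\<lambda>m j. x i (inv (g i) m) (inv (g (i - 1)) j)))
     else undefined)"

definition nowhere_dense_in :: "'a topology \<Rightarrow> 'a set \<Rightarrow> bool" where
  "nowhere_dense_in T S \<longleftrightarrow> T interior_of (T closure_of S) = {}"

definition meager_in :: "'a topology \<Rightarrow> 'a set \<Rightarrow> bool" where
  "meager_in T S \<longleftrightarrow> (\<exists>\<F>. countable \<F> \<and> (\<forall>N\<in>\<F>. nowhere_dense_in T N) \<and> S \<subseteq> \<Union>\<F>)"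

definition comeager_in :: "'a topology \<Rightarrow> 'a set \<Rightarrow> bool" where
  "comeager_in T S \<longleftrightarrow> S \<subseteq> topspace T \<and> meager_in T (topspace T - S)"

end

theory Submission imports Defs begin

text \<open>
  A point of \<open>X_n\<close> lies in \<open>X_n^inj\<close> as soon as every coordinate \<open>x(i)\<close> has pairwise
  distinct rows, since injectivity then propagates up the levels \<open>a^{x,l}_k\<close>. For fixed \<open>i\<close> and
  \<open>l\<^sub>1 \<noteq> l\<^sub>2\<close> the points whose rows \<open>l\<^sub>1, l\<^sub>2\<close> of \<open>x(i)\<close> coincide form a nowhere dense set:
  every point of \<open>X_n\<close> is a limit of points of \<open>X_n\<close> with all rows distinct, and two distinct
  rows stay distinct on a basic open set.

  The action only relabels each level, \<open>a^{g x, l}_k = a^{x, g(k)^-1 l}_k\<close>, so it preserves every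
  \<open>A_k\<close>. Conversely, by condition (1) of \<open>X_n\<close> every element of \<open>A_k\<close> is a member of an element
  of \<open>A_{k+1}\<close>, so \<open>F_n\<close> forces \<open>A^x_k = A^y_k\<close> for all \<open>k\<close>. On \<open>X_n^inj\<close> the labellings
  \<open>l \<mapsto> a^{x,l}_k\<close> are bijections onto \<open>A_k\<close>, and comparing the two labellings of each level
  gives the permutations carrying \<open>x\<close> to \<open>y\<close>.
\<close>

lemma topspace_space_top: "topspace (space_top n) = PiE {i. enat i < n} (\<lambda>_. UNIV)"
  by (simp add: space_top_def seq_top_def cantor_top_def)

lemma Xn_subset_topspace: "Xn n \<subseteq> topspace (space_top n)"
  by (auto simp: Xn_def)

lemma enat_less_diff: "enat i < n \<Longrightarrow> enat (i - j) < n"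
  by (meson diff_le_self enat_ord_simps(1) le_less_trans)

lemma continuous_map_space_top_coord:
  assumes "enat i < n"
  shows "continuous_map (space_top n) (discrete_topology UNIV) (\<lambda>x. x i k m)"
proof -
  have "continuous_map (space_top n) seq_top (\<lambda>x. x i)"
    unfolding space_top_def using assms by (intro continuous_map_product_projection) auto
  moreover have "continuous_map seq_top cantor_top (\<lambda>z. z k)"
    unfolding seq_top_def by (intro continuous_map_product_projection) auto
  moreover have "continuous_map cantor_top (discrete_topology UNIV) (\<lambda>z. z m)"
    unfolding cantor_top_def by (intro continuous_map_product_projection) auto
  ultimately have "continuous_map (space_top n) (discrete_topology UNIV)
      ((\<lambda>z. z m) \<circ> (\<lambda>z. z k) \<circ> (\<lambda>x. x i))"
    by (intro continuous_map_compose)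
  then show ?thesis by (simp add: o_def)
qed

lemma openin_space_top_coord_eq:
  assumes "enat i < n"
  shows "openin (space_top n) {x \<in> topspace (space_top n). x i k m = b}"
  using openin_continuous_map_preimage[OF continuous_map_space_top_coord[OF assms], of "{b}"]
  by simp

lemma limitin_space_top_coordwise:
  assumes "x \<in> topspace (space_top n)" "\<And>N. y N \<in> topspace (space_top n)"
    and "\<And>i k m. enat i < n \<Longrightarrow> eventually (\<lambda>N. y N i k m = x i k m) sequentially"
  shows "limitin (space_top n) y x sequentially"
proof -
  have "limitin seq_top (\<lambda>N. y N i) (x i) sequentially" if "enat i < n" for i
    unfolding seq_top_def cantor_top_def limitin_componentwise
    using that assms(3) by (auto intro!: limitin_eventually)
  then show ?thesis
    using assms(1,2) unfolding space_top_def limitin_componentwise by (auto simp: PiE_def)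
qed

subsection \<open>Comeagerness of the injective part\<close>

lemma nowhere_dense_inI:
  assumes "\<And>U. openin T U \<Longrightarrow> U \<noteq> {} \<Longrightarrow>
    \<exists>V. openin T V \<and> V \<noteq> {} \<and> V \<subseteq> U \<and> V \<inter> S = {}"
  shows "nowhere_dense_in T S"
  unfolding nowhere_dense_in_def
proof (rule ccontr)
  let ?U = "T interior_of (T closure_of S)"
  assume "?U \<noteq> {}"
  then obtain V where V: "openin T V" "V \<noteq> {}" "V \<subseteq> ?U" "V \<inter> S = {}"
    using assms[of ?U] by auto
  then obtain v where "v \<in> V" by blast
  then have "v \<in> T closure_of S"
    using order_trans[OF V(3) interior_of_subset] by (rule subsetD[rotated])
  then obtain w where "w \<in> S" "w \<in> V"
    using V(1) \<open>v \<in> V\<close> unfolding in_closure_of by blast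
  then show False
    using V(4) by blast
qed

text \<open>
  Outside the square \<open>N \<times> N\<close> the approximant has a fixed pattern: row \<open>k\<close> has a \<open>1\<close> in column
  \<open>2k + 2N\<close> and column \<open>m\<close> has a \<open>1\<close> in row \<open>2m + 2N + 1\<close>. This pattern alone yields the
  conditions of \<open>X_n\<close> and pairwise distinct rows.
\<close>
definition row_separating_approx :: "enat \<Rightarrow> pt \<Rightarrow> nat \<Rightarrow> pt" where
  "row_separating_approx n x N = (\<lambda>i. if enat i < n then (\<lambda>k m. if k < N \<and> m < N then x i k m
      else (m = 2*k + 2*N \<or> k = 2*m + 2*N + 1)) else undefined)"

lemma row_separating_approx_rows_distinct:
  assumes "enat i < n" "k \<noteq> k'"
  shows "row_separating_approx n x N i k \<noteq> row_separating_approx n x N i k'"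
proof
  assume eq: "row_separating_approx n x N i k = row_separating_approx n x N i k'"
  show False
  proof (cases "k' = 4*k + 6*N + 1")
    case False
    have "row_separating_approx n x N i k (2*k + 2*N) = row_separating_approx n x N i k' (2*k + 2*N)"
      using eq by simp
    then show False using assms False by (simp add: row_separating_approx_def)
  next
    case True
    have "row_separating_approx n x N i k (2*k' + 2*N) = row_separating_approx n x N i k' (2*k' + 2*N)"
      using eq by simp
    then show False using assms True by (simp add: row_separating_approx_def)
  qed
qed

lemma row_separating_approx_in_Xn: "row_separating_approx n x N \<in> Xn n"
proof -
  let ?y = "row_separating_approx n x N"
  have "?y \<in> topspace (space_top n)"
    by (simp add: topspace_space_top row_separating_approx_def PiE_def extensional_def)
  moreover have "\<exists>k. ?y i k m" if "enat i < n" for i m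
    using that by (intro exI[of _ "2*m + 2*N + 1"]) (simp add: row_separating_approx_def)
  moreover have "\<exists>m. ?y i k m" if "enat i < n" for i k
    using that by (intro exI[of _ "2*k + 2*N"]) (simp add: row_separating_approx_def)
  moreover have "?y i k l1 = ?y i k l2" if "enat i < n" "?y (i - 1) l1 = ?y (i - 1) l2" for i k l1 l2
    using that row_separating_approx_rows_distinct[OF enat_less_diff] by metis
  ultimately show ?thesis unfolding Xn_def by blast
qed

lemma limitin_row_separating_approx:
  assumes "x \<in> topspace (space_top n)"
  shows "limitin (space_top n) (row_separating_approx n x) x sequentially"
proof (rule limitin_space_top_coordwise[OF assms])
  show "row_separating_approx n x N \<in> topspace (space_top n)" for N
    using row_separating_approx_in_Xn Xn_subset_topspace by blast
  show "eventually (\<lambda>N. row_separating_approx n x N i k m = x i k m) sequentially"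
    if "enat i < n" for i k m
    using that unfolding row_separating_approx_def eventually_sequentially
    by (intro exI[of _ "Suc (max k m)"]) auto
qed

lemma nowhere_dense_equal_rows:
  assumes i: "enat i < n" and "l1 \<noteq> l2"
  shows "nowhere_dense_in (subtopology (space_top n) (Xn n)) {x \<in> Xn n. x i l1 = x i l2}"
proof (rule nowhere_dense_inI)
  let ?T = "subtopology (space_top n) (Xn n)"
  fix U assume "openin ?T U" "U \<noteq> {}"
  then obtain Op x where Op: "openin (space_top n) Op" "U = Op \<inter> Xn n" and "x \<in> U"
    by (auto simp: openin_subtopology)
  then have "x \<in> topspace (space_top n)" "x \<in> Op"
    using Xn_subset_topspace by auto
  then obtain N where yOp: "row_separating_approx n x N \<in> Op"
    using limitinD[OF limitin_row_separating_approx Op(1)] by (auto simp: eventually_sequentially)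
  define y where "y = row_separating_approx n x N"
  obtain m where m: "y i l1 m \<noteq> y i l2 m"
    using row_separating_approx_rows_distinct[OF i \<open>l1 \<noteq> l2\<close>] unfolding y_def
    by (auto simp: fun_eq_iff)
  define V where "V = {z \<in> topspace (space_top n). z i l1 m = y i l1 m}
      \<inter> {z \<in> topspace (space_top n). z i l2 m = y i l2 m} \<inter> Op \<inter> Xn n"
  have "openin (space_top n) ({z \<in> topspace (space_top n). z i l1 m = y i l1 m}
      \<inter> {z \<in> topspace (space_top n). z i l2 m = y i l2 m} \<inter> Op)"
    using openin_space_top_coord_eq[OF i] Op(1) by (intro openin_Int)
  then have "openin ?T V"
    unfolding V_def openin_subtopology by blast
  moreover have "y \<in> V"
    using yOp row_separating_approx_in_Xn subsetD[OF Xn_subset_topspace] unfolding V_def y_def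
    by simp
  moreover have "V \<inter> {x \<in> Xn n. x i l1 = x i l2} = {}"
    using m unfolding V_def by auto
  moreover have "V \<subseteq> U"
    unfolding V_def Op(2) by blast
  ultimately show
    "\<exists>V. openin ?T V \<and> V \<noteq> {} \<and> V \<subseteq> U \<and> V \<inter> {x \<in> Xn n. x i l1 = x i l2} = {}"
    by blast
qed

lemma inj_elt_if_inj_rows:
  assumes "\<And>j. j \<le> k \<Longrightarrow> inj (x j)"
  shows "inj (elt x k)"
  using assms
proof (induction k)
  case 0
  then show ?case by (auto simp: inj_def)
next
  case (Suc k)
  have IH: "inj (elt x k)" using Suc by simp
  show ?case
  proof (rule injI)
    fix l1 l2 assume "elt x (Suc k) l1 = elt x (Suc k) l2"
    then have "elt x k ` {j. x (Suc k) l1 j} = elt x k ` {j. x (Suc k) l2 j}"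
      by simp
    then have "x (Suc k) l1 = x (Suc k) l2"
      using IH by (auto simp: inj_image_eq_iff)
    then show "l1 = l2" using Suc.prems[of "Suc k"] by (simp add: inj_eq)
  qed
qed

lemma Xinj_if_inj_rows:
  assumes "x \<in> Xn n" "0 < n" "\<And>j. enat j < n \<Longrightarrow> inj (x j)"
  shows "x \<in> Xinj n"
proof -
  have "inj (elt x k)" if "enat k < n" for k
    using that assms(3) by (intro inj_elt_if_inj_rows) (meson enat_ord_simps(1) le_less_trans)
  then show ?thesis
    using assms by (simp add: Xinj_def enat_0)
qed

lemma comeager_Xinj:
  assumes "1 \<le> n"
  shows "comeager_in (subtopology (space_top n) (Xn n)) (Xinj n)"
proof -
  let ?T = "subtopology (space_top n) (Xn n)"
  let ?F = "(\<lambda>(i, l1, l2). {x \<in> Xn n. x i l1 = x i l2}) ` {(i, l1, l2). enat i < n \<and> l1 \<noteq> l2}"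
  have "0 < n" using assms by (cases n) auto
  then have "Xn n - Xinj n \<subseteq> \<Union>?F"
    using Xinj_if_inj_rows by (fastforce simp: inj_def)
  moreover have "countable ?F" by simp
  moreover have "\<forall>S\<in>?F. nowhere_dense_in ?T S"
    using nowhere_dense_equal_rows by auto
  moreover have "topspace ?T = Xn n"
    using Xn_subset_topspace by auto
  ultimately show ?thesis
    unfolding comeager_in_def meager_in_def by (intro conjI exI[of _ ?F]) (auto simp: Xinj_def)
qed

subsection \<open>The action relabels each level\<close>

lemma image_eq_image_comp_surj:
  assumes "surj h"
  shows "(\<lambda>j. f (h j)) ` {j. P (h j)} = f ` {j. P j}"
proof -
  have "h ` {j. P (h j)} = {j. P j}"
    using assms by (auto dest: surjD)
  then show ?thesis by (metis image_image)
qed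

lemma elt_act:
  assumes "g \<in> Sinf_pow n" "enat k < n"
  shows "elt (act n g x) k = elt x k \<circ> inv (g k)"
  using assms(2)
proof (induction k)
  case 0
  then show ?case by (simp add: act_def o_def)
next
  case (Suc k)
  have k: "enat k < n" using enat_less_diff[OF Suc.prems, of 1] by simp
  have "surj (inv (g k))"
    using assms(1) k by (simp add: Sinf_pow_def bij_imp_bij_inv bij_is_surj)
  then show ?case
    using Suc.prems Suc.IH[OF k]
    by (simp add: act_def o_def fun_eq_iff image_eq_image_comp_surj[where f = "elt x k"])
qed

lemma range_elt_act:
  assumes "g \<in> Sinf_pow n" "enat k < n"
  shows "range (elt (act n g x) k) = range (elt x k)"
proof -
  have "surj (inv (g k))"
    using assms by (simp add: Sinf_pow_def bij_imp_bij_inv bij_is_surj)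
  then show ?thesis
    unfolding elt_act[OF assms] image_comp[symmetric] by simp
qed

lemma act_in_Xn:
  assumes g: "g \<in> Sinf_pow n" and x: "x \<in> Xn n"
  shows "act n g x \<in> Xn n"
proof -
  let ?y = "act n g x"
  have inv_g: "inv (g j) (g j a) = a" if "enat j < n" for j a
    using g that by (simp add: Sinf_pow_def bij_is_inj)
  have "?y \<in> topspace (space_top n)"
    by (simp add: topspace_space_top act_def PiE_def extensional_def)
  moreover have "\<exists>k. ?y i k m" if i: "1 \<le> i" "enat i < n" for i m
  proof -
    obtain k where "x i k (inv (g (i - 1)) m)" using x i unfolding Xn_def by blast
    then show ?thesis using i inv_g by (intro exI[of _ "g i k"]) (simp add: act_def)
  qed
  moreover have "\<exists>m. ?y i k m" if i: "1 \<le> i" "enat i < n" for i k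
  proof -
    obtain m where "x i (inv (g i) k) m" using x i unfolding Xn_def by blast
    then show ?thesis using i inv_g enat_less_diff[OF i(2)]
      by (intro exI[of _ "g (i - 1) m"]) (simp add: act_def)
  qed
  moreover have "?y i k l1 = ?y i k l2"
    if i: "1 \<le> i" "enat i < n" and eq: "?y (i - 1) l1 = ?y (i - 1) l2" for i k l1 l2
  proof -
    have "x (i - 1) (inv (g (i - 1)) l1) = x (i - 1) (inv (g (i - 1)) l2)"
    proof (cases "i - 1 = 0")
      case True
      then show ?thesis using eq enat_less_diff[OF i(2), of 1] by (simp add: act_def fun_eq_iff)
    next
      case False
      show ?thesis
      proof
        fix j
        have "?y (i - 1) l1 (g (i - 1 - 1) j) = ?y (i - 1) l2 (g (i - 1 - 1) j)"
          using eq by simp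
        then show "x (i - 1) (inv (g (i - 1)) l1) j = x (i - 1) (inv (g (i - 1)) l2) j"
          using False enat_less_diff[OF i(2)] inv_g[OF enat_less_diff[OF i(2), of "Suc (Suc 0)"]]
          by (simp add: act_def diff_diff_add)
      qed
    qed
    then have "x i k' (inv (g (i - 1)) l1) = x i k' (inv (g (i - 1)) l2)" for k'
      using x i unfolding Xn_def by blast
    then show ?thesis using i by (simp add: act_def)
  qed
  ultimately show ?thesis unfolding Xn_def by blast
qed

lemma act_in_Xinj:
  assumes "1 \<le> n" and g: "g \<in> Sinf_pow n" and x: "x \<in> Xinj n"
  shows "act n g x \<in> Xinj n"
proof -
  have inj_inv_g: "inj (inv (g k))" if "enat k < n" for k
    using g that by (simp add: Sinf_pow_def bij_imp_bij_inv bij_is_inj)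
  have "enat 0 < n" using assms(1) by (cases n) (auto simp: one_enat_def)
  then have "inj (\<lambda>k. act n g x 0 k)"
    using x inj_inv_g by (simp add: act_def Xinj_def inj_compose[unfolded o_def])
  moreover have "inj (elt (act n g x) k)" if "1 \<le> k \<and> enat k < n" for k
    using that x inj_inv_g by (simp add: elt_act[OF g] Xinj_def inj_compose)
  ultimately show ?thesis
    using act_in_Xn[OF g] x by (simp add: Xinj_def)
qed

subsection \<open>\<open>F_n\<close> determines every level\<close>

fun hmembers :: "hset \<Rightarrow> hset set" where
  "hmembers (Ur _) = {}"
| "hmembers (CS s) = rcset s"

lemma range_elt_eq_Union_members:
  assumes "x \<in> Xn n" "enat (Suc k) < n"
  shows "range (elt x k) = \<Union> (hmembers ` range (elt x (Suc k)))"
proof -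
  have "\<forall>i. 1 \<le> i \<and> enat i < n \<longrightarrow> (\<forall>m. \<exists>l. x i l m)"
    using assms(1) unfolding Xn_def by blast
  then have cover: "\<exists>l. x (Suc k) l m" for m
    using assms(2) by simp
  show ?thesis
  proof (intro equalityI subsetI)
    fix a assume "a \<in> range (elt x k)"
    then obtain m where "a = elt x k m" by blast
    moreover obtain l where "x (Suc k) l m" using cover by blast
    ultimately show "a \<in> \<Union> (hmembers ` range (elt x (Suc k)))" by auto
  qed auto
qed

lemma range_elt_eq_below:
  assumes "x \<in> Xn n" "y \<in> Xn n" "enat k < n"
    and "range (elt x k) = range (elt y k)" "j \<le> k"
  shows "range (elt x j) = range (elt y j)"
  using assms(3-)
proof (induction k)
  case (Suc k)
  show ?case
  proof (cases "j = Suc k")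
    case False
    have "range (elt x k) = range (elt y k)"
      using Suc.prems(2) range_elt_eq_Union_members[OF assms(1) Suc.prems(1)]
        range_elt_eq_Union_members[OF assms(2) Suc.prems(1)]
      by (simp only:)
    then show ?thesis
      using Suc False enat_less_diff[OF Suc.prems(1), of 1] by simp
  qed (use Suc.prems in simp)
qed simp

lemma Fn_iff_range_elt_eq:
  assumes "1 \<le> n" "x \<in> Xn n" "y \<in> Xn n"
  shows "Fn n x y \<longleftrightarrow> (\<forall>k. enat k < n \<longrightarrow> range (elt x k) = range (elt y k))"
proof (cases n)
  case (enat m)
  then have "m - 1 < m"
    using assms(1) by (simp add: one_enat_def)
  then have "Fn n x y \<longleftrightarrow> range (elt x (m - 1)) = range (elt y (m - 1))"
    using assms enat by (simp add: Fn_def Aset_def)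
  also have "\<dots> \<longleftrightarrow> (\<forall>k. enat k < n \<longrightarrow> range (elt x k) = range (elt y k))"
  proof (intro iffI allI impI)
    fix k assume top: "range (elt x (m - 1)) = range (elt y (m - 1))" and "enat k < n"
    then have "k \<le> m - 1" using enat by simp
    then show "range (elt x k) = range (elt y k)"
      using range_elt_eq_below[OF assms(2,3) _ top] enat \<open>m - 1 < m\<close> by simp
  qed (use enat \<open>m - 1 < m\<close> in simp)
  finally show ?thesis .
next
  case infinity
  have "(\<forall>j::nat. 1 \<le> j \<longrightarrow> P (j - 1)) \<longleftrightarrow> (\<forall>k. P k)" for P
    by (metis diff_Suc_1 le_add1 plus_1_eq_Suc)
  then show ?thesis
    using assms infinity by (simp add: Fn_def Aset_def)
qed

subsection \<open>Equal levels give an orbit\<close>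

lemma inj_elt_Xinj:
  assumes "x \<in> Xinj n" "enat k < n"
  shows "inj (elt x k)"
  using assms by (cases k) (auto simp: Xinj_def inj_def)

lemma act_eq_if_range_elt_eq:
  assumes x: "x \<in> Xinj n" and y: "y \<in> Xinj n"
    and R: "\<And>k. enat k < n \<Longrightarrow> range (elt x k) = range (elt y k)"
  shows "\<exists>g\<in>Sinf_pow n. act n g x = y"
proof -
  define h where "h k = inv (elt x k) \<circ> elt y k" for k
  have elt_h: "elt x k (h k l) = elt y k l" if "enat k < n" for k l
    unfolding h_def using R[OF that] by (metis f_inv_into_f rangeI o_apply)
  have bij_h: "bij (h k)" if k: "enat k < n" for k
  proof (rule bijI)
    show "inj (h k)"
      using inj_elt_Xinj[OF y k] elt_h[OF k] by (metis injI inj_eq)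
    have "h k (inv (elt y k) (elt x k l)) = l" for l
    proof -
      have "elt y k (inv (elt y k) (elt x k l)) = elt x k l"
        by (rule f_inv_into_f) (use R[OF k] in blast)
      then show ?thesis
        unfolding h_def using inj_elt_Xinj[OF x k] by simp
    qed
    then show "surj (h k)" by (rule surjI)
  qed
  define g where "g k = inv (h k)" for k
  have inv_g: "inv (g k) = h k" if "enat k < n" for k
    unfolding g_def using bij_h[OF that] by (simp add: inv_inv_eq)
  have g: "g \<in> Sinf_pow n"
    unfolding Sinf_pow_def g_def using bij_h by (simp add: bij_imp_bij_inv)
  have "act n g x i = y i" for i
  proof (cases "enat i < n")
    case False
    then show ?thesis
      using y by (simp add: act_def Xinj_def Xn_def topspace_space_top PiE_def extensional_def)
  next
    case i: True
    show ?thesis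
    proof (cases i)
      case 0
      then show ?thesis using i elt_h[OF i] inv_g[OF i] by (simp add: act_def fun_eq_iff)
    next
      case (Suc i')
      have i': "enat i' < n" using enat_less_diff[OF i, of 1] Suc by simp
      have "elt x i' ` {j. x i (h i m) j} = elt x i' ` (h i' ` {j. y i m j})" for m
        using elt_h[OF i, of m] elt_h[OF i'] Suc by (simp add: image_image)
      then have rows: "{j. x i (h i m) j} = h i' ` {j. y i m j}" for m
        using inj_elt_Xinj[OF x i'] by (simp add: inj_image_eq_iff)
      have "x i (h i m) (h i' j) = y i m j" for m j
      proof -
        have "x i (h i m) (h i' j) \<longleftrightarrow> h i' j \<in> h i' ` {j. y i m j}"
          by (simp flip: rows)
        also have "\<dots> \<longleftrightarrow> y i m j"
          using inj_image_mem_iff[OF bij_is_inj[OF bij_h[OF i']]] by simp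
        finally show ?thesis by simp
      qed
      then show ?thesis
        using i Suc inv_g[OF i] inv_g[OF i'] by (simp add: act_def fun_eq_iff)
    qed
  qed
  then show ?thesis using g by blast
qed

lemma orbit_iff_range_elt_eq:
  assumes "x \<in> Xinj n" "y \<in> Xinj n"
  shows "(\<exists>g\<in>Sinf_pow n. act n g x = y) \<longleftrightarrow>
    (\<forall>k. enat k < n \<longrightarrow> range (elt x k) = range (elt y k))"
  using range_elt_act act_eq_if_range_elt_eq[OF assms] by blast

theorem mainTheorem4:
  fixes n :: enat
  assumes "1 \<le> n"
  shows "comeager_in (subtopology (space_top n) (Xn n)) (Xinj n)
    \<and> (\<forall>g\<in>Sinf_pow n. \<forall>x\<in>Xinj n. act n g x \<in> Xinj n)
    \<and> (\<forall>x\<in>Xinj n. \<forall>y\<in>Xinj n. (\<exists>g\<in>Sinf_pow n. act n g x = y) \<longleftrightarrow> Fn n x y)"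
proof (intro conjI ballI)
  show "comeager_in (subtopology (space_top n) (Xn n)) (Xinj n)"
    using comeager_Xinj[OF assms] .
  show "act n g x \<in> Xinj n" if "g \<in> Sinf_pow n" "x \<in> Xinj n" for g x
    using act_in_Xinj[OF assms that] .
  fix x y assume x: "x \<in> Xinj n" and y: "y \<in> Xinj n"
  then have "x \<in> Xn n" "y \<in> Xn n" by (simp_all add: Xinj_def)
  then show "(\<exists>g\<in>Sinf_pow n. act n g x = y) \<longleftrightarrow> Fn n x y"
    by (simp only: orbit_iff_range_elt_eq[OF x y] Fn_iff_range_elt_eq[OF assms])
qed

end
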